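(* Let $l\ge1$ and fixed states $\sigma_1,\dots,\sigma_l\in D_k$ be given (independent of $n$). For each $n$, let $(M_i^{(n)})_{i=1}^l$ be a POVM on $\mathbb C^{N}$ ($N=N(n)$; $M_i^{(n)}\ge0$, $\sum_iM_i^{(n)}=I_N$) with $\|M_i^{(n)}\|=1$ for all $i$, and let $\Phi_n(\rho)=\sum_{i=1}^l\mathrm{Tr}[M_i^{(n)}\rho]\sigma_i$. Then the sequence of projections $P_n=V_nV_n^*$ associated to $\Phi_n$ (via Stinespring isometries $V_n$ with $\Phi_n(X)=(\mathrm{id}\otimes\mathrm{Tr})(V_nXV_n^* )$) satisfies condition $\mathcal C_m$, where $$m=\liminf_{n\to\infty}\min_{1\le i\le l}\dim_1M_i^{(n)}\ \ge 1.$$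
   Context: $\dim_1X$ denotes the dimension of the eigenspace of $X$ for the eigenvalue $1$. Condition $\mathcal C_m$: for every $A\in D_k$, the $m$ largest eigenvalues of $P_n(A\otimes I)P_n$ converge as $n\to\infty$ to a common limit $f(A)$. $D_k$ is the set of $k\times k$ density matrices. *)

theory Defs
  imports "Jordan_Normal_Form.Jordan_Normal_Form_Uniqueness"
          "Jordan_Normal_Form.Schur_Decomposition"
          "HOL-Library.Extended_Nat"
          "HOL-Library.Liminf_Limsup"
begin

definition vnorm :: "complex vec \<Rightarrow> real" where
  "vnorm v = sqrt (\<Sum>i<dim_vec v. (cmod (v $ i))\<^sup>2)"

definition op_norm :: "complex mat \<Rightarrow> real" where
  "op_norm A = Sup {vnorm (A *\<^sub>v v) | v. v \<in> carrier_vec (dim_col A) \<and> vnorm v \<le> 1}"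

definition msum :: "nat \<Rightarrow> nat \<Rightarrow> ('i \<Rightarrow> complex mat) \<Rightarrow> 'i set \<Rightarrow> complex mat" where
  "msum r c A I = mat r c (\<lambda>ij. \<Sum>i\<in>I. A i $$ ij)"

definition mtrace :: "complex mat \<Rightarrow> complex" where
  "mtrace A = (\<Sum>i<dim_row A. A $$ (i,i))"

definition psd :: "nat \<Rightarrow> complex mat \<Rightarrow> bool" where
  "psd n A \<longleftrightarrow> A \<in> carrier_mat n n \<and> mat_adjoint A = A \<and>
     (\<forall>v \<in> carrier_vec n. 0 \<le> Re (\<Sum>i<n. cnj (v $ i) * (A *\<^sub>v v) $ i))"

definition density :: "nat \<Rightarrow> complex mat set" where
  "density k = {A. psd k A \<and> mtrace A = 1}"

(* dim_1 X : dimension of the eigenspace of X for eigenvalue 1 *)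
definition dim1 :: "complex mat \<Rightarrow> nat" where
  "dim1 X = dim_gen_eigenspace X 1 1"

definition eigs_desc :: "complex mat \<Rightarrow> real list" where
  "eigs_desc A = rev (sorted_list_of_multiset (image_mset Re (proots (char_poly A))))"

definition kron :: "complex mat \<Rightarrow> complex mat \<Rightarrow> complex mat" where
  "kron A B = mat (dim_row A * dim_row B) (dim_col A * dim_col B)
     (\<lambda>(i,j). A $$ (i div dim_row B, j div dim_col B) * B $$ (i mod dim_row B, j mod dim_col B))"

(* (id \<otimes> Tr) : partial trace over the second factor C^d of C^k \<otimes> C^d *)
definition ptrace2 :: "nat \<Rightarrow> nat \<Rightarrow> complex mat \<Rightarrow> complex mat" where
  "ptrace2 k d X = mat k k (\<lambda>(i,j). \<Sum>r<d. X $$ (i * d + r, j * d + r))"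

definition cond_C :: "nat \<Rightarrow> nat \<Rightarrow> (nat \<Rightarrow> nat) \<Rightarrow> (nat \<Rightarrow> complex mat) \<Rightarrow> bool" where
  "cond_C m k d P \<longleftrightarrow> (\<forall>A \<in> density k. \<exists>f::real. \<forall>j<m.
      (\<lambda>n. eigs_desc (P n * kron A (1\<^sub>m (d n)) * P n) ! j) \<longlonglongrightarrow> f)"

end

theory Submission
  imports Defs "Jordan_Normal_Form.Jordan_Normal_Form_Existence"
begin

text \<open>
  Write \<open>P = V V\<^sup>*\<close> and \<open>\<Phi>\<^sup>\<dagger>(A) = V\<^sup>* (A \<otimes> I) V = \<Sum>\<^sub>t Tr (A \<sigma>\<^sub>t) M\<^sub>t\<close>. Since the effects
  \<open>M\<^sub>t\<close> are positive and sum to \<open>I\<close>, \<open>\<Phi>\<^sup>\<dagger>(A) \<le> c\<close> for \<open>c = max\<^sub>t Re Tr (A \<sigma>\<^sub>t)\<close>, so every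
  eigenvalue of \<open>P (A \<otimes> I) P\<close> is at most \<open>c\<close>. An effect of norm one has eigenvalue \<open>1\<close>, and
  a fixed vector \<open>w\<close> of an effect \<open>M\<^sub>i\<close> attaining the maximum is annihilated by all other
  effects; hence \<open>\<Phi>\<^sup>\<dagger>(A) w = c w\<close> and \<open>V w\<close> is an eigenvector of \<open>P (A \<otimes> I) P\<close> for \<open>c\<close>.
  So \<open>c\<close> has multiplicity at least \<open>min\<^sub>i dim\<^sub>1 M\<^sub>i\<close>, and eventually the \<open>m\<close> largest
  eigenvalues all equal \<open>c\<close>, which does not depend on \<open>n\<close>.
\<close>

section \<open>Complex inner product and positive forms\<close>

definition cinner :: "complex vec \<Rightarrow> complex vec \<Rightarrow> complex" where
  "cinner u w = (\<Sum>i<dim_vec w. cnj (u $ i) * w $ i)"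

lemma mat_adjoint_dim [simp]:
  "dim_row (mat_adjoint A) = dim_col A" "dim_col (mat_adjoint A) = dim_row A"
  unfolding mat_adjoint_def by simp_all

lemma mat_adjoint_carrier [simp]: "A \<in> carrier_mat n m \<Longrightarrow> mat_adjoint A \<in> carrier_mat m n"
  unfolding carrier_mat_def by simp

lemma mat_adjoint_index [simp]:
  "i < dim_col A \<Longrightarrow> j < dim_row A \<Longrightarrow> mat_adjoint A $$ (i,j) = cnj (A $$ (j,i))"
  unfolding mat_adjoint_def by (simp add: mat_of_rows_index)

lemma mult_mat_vec_index:
  assumes "A \<in> carrier_mat n m" "v \<in> carrier_vec m" "i < n"
  shows "(A *\<^sub>v v) $ i = (\<Sum>j<m. A $$ (i,j) * v $ j)"
  using assms by (auto simp: scalar_prod_def atLeast0LessThan intro: sum.cong)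

lemma mult_mat_index:
  assumes "A \<in> carrier_mat n m" "B \<in> carrier_mat m r" "i < n" "j < r"
  shows "(A * B) $$ (i,j) = (\<Sum>k<m. A $$ (i,k) * B $$ (k,j))"
  using assms by (auto simp: scalar_prod_def atLeast0LessThan intro: sum.cong)

lemma cinner_mat_adjoint:
  assumes A: "A \<in> carrier_mat n m" and x: "x \<in> carrier_vec n" and y: "y \<in> carrier_vec m"
  shows "cinner x (A *\<^sub>v y) = cinner (mat_adjoint A *\<^sub>v x) y"
proof -
  have "cinner x (A *\<^sub>v y) = (\<Sum>i<n. \<Sum>j<m. cnj (x $ i) * A $$ (i,j) * y $ j)"
    unfolding cinner_def using A y
    by (simp del: index_mult_mat_vec add: mult_mat_vec_index sum_distrib_left mult.assoc)
  also have "\<dots> = (\<Sum>j<m. cnj (\<Sum>i<n. cnj (A $$ (i,j)) * x $ i) * y $ j)"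
    by (subst sum.swap) (simp add: cnj_sum sum_distrib_left mult.commute mult.left_commute)
  also have "\<dots> = cinner (mat_adjoint A *\<^sub>v x) y"
    unfolding cinner_def using A x y
    by (intro sum.cong) (auto simp del: index_mult_mat_vec simp: mult_mat_vec_index[of _ m n])
  finally show ?thesis .
qed

lemma cinner_cnj: "dim_vec u = dim_vec w \<Longrightarrow> cinner u w = cnj (cinner w u)"
  unfolding cinner_def by (simp add: cnj_sum mult.commute)

lemma cinner_mat_adjoint_right:
  assumes V: "V \<in> carrier_mat n m" and u: "u \<in> carrier_vec m" and z: "z \<in> carrier_vec n"
  shows "cinner u (mat_adjoint V *\<^sub>v z) = cinner (V *\<^sub>v u) z"
  using cinner_mat_adjoint[OF V z u] cinner_cnj[of u "mat_adjoint V *\<^sub>v z"]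
    cinner_cnj[of "V *\<^sub>v u" z] V u z by simp

lemma cinner_self: "cinner u u = of_real (\<Sum>i<dim_vec u. (cmod (u $ i))\<^sup>2)"
  unfolding cinner_def of_real_sum
  by (intro sum.cong refl) (metis complex_norm_square mult.commute of_real_power)

lemma Re_cinner_self: "Re (cinner u u) = (vnorm u)\<^sup>2"
  unfolding cinner_self vnorm_def by (simp add: sum_nonneg)

lemma cinner_self_real: "cinner u u = of_real (Re (cinner u u))"
  unfolding cinner_self by simp

lemma cinner_self_nonneg: "0 \<le> Re (cinner u u)"
  unfolding Re_cinner_self by simp

lemma cinner_self_eq_zero:
  assumes "u \<in> carrier_vec n" "cinner u u = 0"
  shows "u = 0\<^sub>v n"
proof -
  have "(\<Sum>i<n. (cmod (u $ i))\<^sup>2) = 0"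
    using assms cinner_self[of u] by (metis carrier_vecD of_real_eq_0_iff)
  then have "\<forall>i\<in>{..<n}. (cmod (u $ i))\<^sup>2 = 0"
    by (subst (asm) sum_nonneg_eq_0_iff) simp_all
  then show ?thesis using assms by (intro eq_vecI) simp_all
qed

lemma cinner_self_pos: "u \<in> carrier_vec n \<Longrightarrow> u \<noteq> 0\<^sub>v n \<Longrightarrow> 0 < Re (cinner u u)"
  using cinner_self_eq_zero cinner_self_nonneg cinner_self_real
  by (metis of_real_eq_0_iff order_le_less)

lemma cinner_minus_right: "dim_vec v = dim_vec w \<Longrightarrow> cinner u (v - w) = cinner u v - cinner u w"
  unfolding cinner_def by (simp add: right_diff_distrib sum_subtractf)

lemma cinner_smult_right: "cinner u (c \<cdot>\<^sub>v w) = c * cinner u w"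
  unfolding cinner_def by (simp add: sum_distrib_left mult.left_commute)

lemma cinner_minus_left:
  "dim_vec u = dim_vec v \<Longrightarrow> dim_vec w = dim_vec u \<Longrightarrow> cinner (u - v) w = cinner u w - cinner v w"
  unfolding cinner_def by (simp add: left_diff_distrib sum_subtractf)

lemma cinner_smult_left: "dim_vec w = dim_vec u \<Longrightarrow> cinner (c \<cdot>\<^sub>v u) w = cnj c * cinner u w"
  unfolding cinner_def by (simp add: sum_distrib_left mult.assoc)

lemma diff_eq_zero_vec_iff:
  fixes a b :: "'a :: ab_group_add vec"
  assumes "a \<in> carrier_vec n" "b \<in> carrier_vec n"
  shows "a - b = 0\<^sub>v n \<longleftrightarrow> a = b"
proof
  assume zero: "a - b = 0\<^sub>v n"
  show "a = b"
  proof (rule eq_vecI)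
    fix i assume "i < dim_vec b"
    then have "(a - b) $ i = 0" using zero assms by simp
    then show "a $ i = b $ i" using assms \<open>i < dim_vec b\<close> by simp
  qed (use assms in simp)
qed (use assms in simp)

text \<open>
  Unlike \<open>psd\<close>, only the sesquilinear form is constrained: this class contains \<open>1 - M\<close> and
  \<open>c - \<Phi>\<^sup>\<dagger>(A)\<close> below without any calculus of matrix adjoints.
\<close>

definition positive_form :: "nat \<Rightarrow> complex mat \<Rightarrow> bool" where
  "positive_form n B \<longleftrightarrow> B \<in> carrier_mat n n \<and>
     (\<forall>x \<in> carrier_vec n. \<forall>y \<in> carrier_vec n. cinner x (B *\<^sub>v y) = cnj (cinner y (B *\<^sub>v x))) \<and>
     (\<forall>x \<in> carrier_vec n. 0 \<le> Re (cinner x (B *\<^sub>v x)))"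

lemma positive_formI:
  assumes "B \<in> carrier_mat n n"
    and "\<And>x y. x \<in> carrier_vec n \<Longrightarrow> y \<in> carrier_vec n \<Longrightarrow> cinner x (B *\<^sub>v y) = cnj (cinner y (B *\<^sub>v x))"
    and "\<And>x. x \<in> carrier_vec n \<Longrightarrow> 0 \<le> Re (cinner x (B *\<^sub>v x))"
  shows "positive_form n B"
  using assms unfolding positive_form_def by blast

lemma positive_formD:
  assumes "positive_form n B"
  shows positive_form_carrier: "B \<in> carrier_mat n n"
    and positive_form_hermitian: "\<And>x y. x \<in> carrier_vec n \<Longrightarrow> y \<in> carrier_vec n \<Longrightarrow>
          cinner x (B *\<^sub>v y) = cnj (cinner y (B *\<^sub>v x))"
    and positive_form_nonneg: "\<And>x. x \<in> carrier_vec n \<Longrightarrow> 0 \<le> Re (cinner x (B *\<^sub>v x))"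
  using assms unfolding positive_form_def by blast+

lemma positive_form_real:
  assumes "positive_form n B" "x \<in> carrier_vec n"
  shows "cinner x (B *\<^sub>v x) = of_real (Re (cinner x (B *\<^sub>v x)))"
  using positive_form_hermitian[OF assms(1) assms(2) assms(2)]
  by (metis Reals_cnj_iff complex_is_Real_iff of_real_Re)

lemma self_adjoint_hermitian:
  assumes A: "A \<in> carrier_mat n n" and h: "mat_adjoint A = A"
    and x: "x \<in> carrier_vec n" and y: "y \<in> carrier_vec n"
  shows "cinner x (A *\<^sub>v y) = cnj (cinner y (A *\<^sub>v x))"
  using cinner_mat_adjoint[OF A x y] cinner_cnj[of "A *\<^sub>v x" y] h A x y by simp

lemma psd_cinner_nonneg:
  assumes "psd n A" "v \<in> carrier_vec n"
  shows "0 \<le> Re (cinner v (A *\<^sub>v v))"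
proof -
  have A: "A \<in> carrier_mat n n" and nonneg: "0 \<le> Re (\<Sum>i<n. cnj (v $ i) * (A *\<^sub>v v) $ i)"
    using assms unfolding psd_def by auto
  then show ?thesis unfolding cinner_def by simp
qed

lemma psd_positive_form:
  assumes "psd n A"
  shows "positive_form n A"
proof -
  have A: "A \<in> carrier_mat n n" and h: "mat_adjoint A = A" using assms unfolding psd_def by auto
  show ?thesis by (intro positive_formI A self_adjoint_hermitian[OF A h] psd_cinner_nonneg[OF assms])
qed

lemma le_mult_of_quadratic_nonneg:
  fixes a b K :: real
  assumes "0 \<le> K" "0 \<le> b" and quadratic: "\<And>t. 0 \<le> a - 2 * t * K + t\<^sup>2 * K * b"
  shows "K \<le> a * b"
proof (cases "b = 0")
  case True
  have "0 \<le> a - 2 * ((a + 1) / (2 * K)) * K" using quadratic[of "(a + 1) / (2 * K)"] True by simp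
  with True \<open>0 \<le> K\<close> show ?thesis by (cases "K = 0") (auto simp: field_simps)
next
  case False
  with \<open>0 \<le> b\<close> have "0 < b" by simp
  have "0 \<le> a - 2 * (1 / b) * K + (1 / b)\<^sup>2 * K * b" by (rule quadratic)
  also have "\<dots> = a - K / b" using \<open>0 < b\<close> by (simp add: field_simps power2_eq_square)
  finally show ?thesis using \<open>0 < b\<close> by (simp add: field_simps mult.commute)
qed

lemma positive_form_cauchy_schwarz:
  assumes B: "positive_form n B" and x: "x \<in> carrier_vec n" and y: "y \<in> carrier_vec n"
  shows "(cmod (cinner x (B *\<^sub>v y)))\<^sup>2 \<le> Re (cinner x (B *\<^sub>v x)) * Re (cinner y (B *\<^sub>v y))"
proof -
  note BC = positive_form_carrier[OF B]
  define c where "c = cinner x (B *\<^sub>v y)"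
  define a where "a = cinner x (B *\<^sub>v x)"
  define b where "b = cinner y (B *\<^sub>v y)"
  have cc: "c * cnj c = of_real ((cmod c)\<^sup>2)" by (rule complex_norm_square[symmetric])
  \<comment> \<open>the form is nonnegative at every point of the line through \<open>x\<close> in direction \<open>y\<close>\<close>
  have "0 \<le> Re a - 2 * t * (cmod c)\<^sup>2 + t\<^sup>2 * (cmod c)\<^sup>2 * Re b" for t :: real
  proof -
    define s where "s = complex_of_real t * cnj c"
    define z where "z = x - s \<cdot>\<^sub>v y"
    have z: "z \<in> carrier_vec n" unfolding z_def using x y by auto
    have Bz: "B *\<^sub>v z = B *\<^sub>v x - s \<cdot>\<^sub>v (B *\<^sub>v y)"
      unfolding z_def using BC x y by (simp add: mult_minus_distrib_mat_vec mult_mat_vec)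
    have "cinner z (B *\<^sub>v z) = (a - s * c) - cnj s * (cnj c - s * b)"
      unfolding Bz unfolding z_def a_def b_def c_def
      using x y BC positive_form_hermitian[OF B y x]
      by (simp add: cinner_minus_left cinner_minus_right cinner_smult_right cinner_smult_left)
        (simp add: algebra_simps)
    also have "\<dots> = a - (s * c + cnj s * cnj c) + (cnj s * s) * b"
      by (simp add: algebra_simps)
    also have "\<dots> = a - of_real (2 * t * (cmod c)\<^sup>2) + of_real (t\<^sup>2 * (cmod c)\<^sup>2) * b"
    proof -
      have "s * c = of_real (t * (cmod c)\<^sup>2)" "cnj s * cnj c = of_real (t * (cmod c)\<^sup>2)"
        unfolding s_def using cc by (simp_all add: ac_simps)
      moreover have "cnj s * s = of_real (t\<^sup>2 * (cmod c)\<^sup>2)"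
        unfolding s_def using cc by (simp add: power2_eq_square ac_simps)
      ultimately show ?thesis by simp
    qed
    finally show ?thesis using positive_form_nonneg[OF B z] by simp
  qed
  then have "(cmod c)\<^sup>2 \<le> Re a * Re b"
    by (rule le_mult_of_quadratic_nonneg[rotated 2])
      (auto simp: b_def intro: positive_form_nonneg[OF B y])
  then show ?thesis unfolding a_def b_def c_def .
qed

lemma positive_form_kernel:
  assumes B: "positive_form n B" and y: "y \<in> carrier_vec n" and z: "Re (cinner y (B *\<^sub>v y)) = 0"
  shows "B *\<^sub>v y = 0\<^sub>v n"
proof -
  have By: "B *\<^sub>v y \<in> carrier_vec n" using positive_form_carrier[OF B] y by auto
  from positive_form_cauchy_schwarz[OF B By y] z
  have "cinner (B *\<^sub>v y) (B *\<^sub>v y) = 0" by simp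
  then show ?thesis by (rule cinner_self_eq_zero[OF By])
qed

section \<open>Contractions of operator norm one\<close>

lemma cmod_cinner_mult_mat_vec_le:
  assumes C: "C \<in> carrier_mat n n" and u: "u \<in> carrier_vec n"
  shows "cmod (cinner (C *\<^sub>v u) u) \<le> (\<Sum>p<n. \<Sum>q<n. cmod (C $$ (p,q))) * Re (cinner u u)"
proof -
  define a where "a p = cmod (u $ p)" for p
  define T where "T = Re (cinner u u)"
  have T: "T = (\<Sum>p<n. (a p)\<^sup>2)" unfolding T_def a_def cinner_self using u by simp
  have a_sq_le: "(a p)\<^sup>2 \<le> T" if "p < n" for p
    unfolding T using that by (intro member_le_sum) auto
  have a_mult_le: "a q * a p \<le> T" if "p < n" "q < n" for p q
    using sum_squares_bound[of "a q" "a p"] a_sq_le[OF that(1)] a_sq_le[OF that(2)] by simp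
  have "cmod (cinner (C *\<^sub>v u) u) \<le> (\<Sum>p<n. cmod ((C *\<^sub>v u) $ p) * a p)"
    using norm_sum[of "\<lambda>i. cnj ((C *\<^sub>v u) $ i) * u $ i" "{..<n}"] u
    by (simp add: cinner_def a_def norm_mult)
  also have "\<dots> \<le> (\<Sum>p<n. \<Sum>q<n. cmod (C $$ (p,q)) * (a q * a p))"
  proof (intro sum_mono)
    fix p assume "p \<in> {..<n}"
    then have "(C *\<^sub>v u) $ p = (\<Sum>q<n. C $$ (p,q) * u $ q)" using mult_mat_vec_index[OF C u] by simp
    then have "cmod ((C *\<^sub>v u) $ p) \<le> (\<Sum>q<n. cmod (C $$ (p,q)) * a q)"
      using norm_sum[of "\<lambda>q. C $$ (p,q) * u $ q" "{..<n}"] by (simp add: a_def norm_mult)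
    then have "cmod ((C *\<^sub>v u) $ p) * a p \<le> (\<Sum>q<n. cmod (C $$ (p,q)) * a q) * a p"
      by (rule mult_right_mono) (simp add: a_def)
    then show "cmod ((C *\<^sub>v u) $ p) * a p \<le> (\<Sum>q<n. cmod (C $$ (p,q)) * (a q * a p))"
      by (simp add: sum_distrib_right mult.assoc)
  qed
  also have "\<dots> \<le> (\<Sum>p<n. \<Sum>q<n. cmod (C $$ (p,q)) * T)"
    by (intro sum_mono mult_left_mono a_mult_le) auto
  finally show ?thesis unfolding T_def by (simp add: sum_distrib_right)
qed

lemma positive_form_coercive:
  assumes B: "positive_form n B" and C: "C \<in> carrier_mat n n" and BC: "B * C = 1\<^sub>m n"
    and u: "u \<in> carrier_vec n"
  shows "Re (cinner u u) \<le> (\<Sum>p<n. \<Sum>q<n. cmod (C $$ (p,q))) * Re (cinner u (B *\<^sub>v u))"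
proof -
  define \<kappa> where "\<kappa> = (\<Sum>p<n. \<Sum>q<n. cmod (C $$ (p,q)))"
  define T where "T = Re (cinner u u)"
  define y where "y = C *\<^sub>v u"
  have y: "y \<in> carrier_vec n" unfolding y_def using C u by simp
  have By: "B *\<^sub>v y = u" unfolding y_def using positive_form_carrier[OF B] C u BC
    by (metis assoc_mult_mat_vec one_mult_mat_vec)
  have T0: "0 \<le> T" unfolding T_def by (rule cinner_self_nonneg)
  have Bu0: "0 \<le> Re (cinner u (B *\<^sub>v u))" by (rule positive_form_nonneg[OF B u])
  have "Re (cinner y (B *\<^sub>v y)) \<le> cmod (cinner y u)" unfolding By by (rule complex_Re_le_cmod)
  also have "\<dots> \<le> \<kappa> * T"
    unfolding y_def \<kappa>_def T_def by (rule cmod_cinner_mult_mat_vec_le[OF C u])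
  finally have yBy: "Re (cinner y (B *\<^sub>v y)) \<le> \<kappa> * T" .
  have "T\<^sup>2 = (cmod (cinner u (B *\<^sub>v y)))\<^sup>2"
    unfolding By T_def by (subst cinner_self_real) (simp add: cinner_self_nonneg)
  also have "\<dots> \<le> Re (cinner u (B *\<^sub>v u)) * Re (cinner y (B *\<^sub>v y))"
    by (rule positive_form_cauchy_schwarz[OF B u y])
  also have "\<dots> \<le> Re (cinner u (B *\<^sub>v u)) * (\<kappa> * T)"
    by (intro mult_left_mono yBy Bu0)
  finally have "T * T \<le> (\<kappa> * Re (cinner u (B *\<^sub>v u))) * T"
    by (simp add: power2_eq_square ac_simps)
  with T0 Bu0 have "T \<le> \<kappa> * Re (cinner u (B *\<^sub>v u))"
    by (cases "T = 0") (auto simp: \<kappa>_def sum_nonneg)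
  then show ?thesis unfolding T_def \<kappa>_def .
qed

lemma vnorm_mult_mat_vec_sq_le:
  assumes M: "positive_form n M"
    and contraction: "\<And>x. x \<in> carrier_vec n \<Longrightarrow> Re (cinner x (M *\<^sub>v x)) \<le> Re (cinner x x)"
    and u: "u \<in> carrier_vec n"
  shows "(vnorm (M *\<^sub>v u))\<^sup>2 \<le> Re (cinner u (M *\<^sub>v u))"
proof -
  have Mu: "M *\<^sub>v u \<in> carrier_vec n" using positive_form_carrier[OF M] u by simp
  define R where "R = Re (cinner (M *\<^sub>v u) (M *\<^sub>v u))"
  have R0: "0 \<le> R" unfolding R_def by (rule cinner_self_nonneg)
  have "R\<^sup>2 = (cmod (cinner (M *\<^sub>v u) (M *\<^sub>v u)))\<^sup>2"
    unfolding R_def by (subst cinner_self_real) (simp add: cinner_self_nonneg)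
  also have "\<dots> \<le> Re (cinner (M *\<^sub>v u) (M *\<^sub>v (M *\<^sub>v u))) * Re (cinner u (M *\<^sub>v u))"
    by (rule positive_form_cauchy_schwarz[OF M Mu u])
  also have "\<dots> \<le> R * Re (cinner u (M *\<^sub>v u))"
    unfolding R_def by (intro mult_right_mono contraction Mu positive_form_nonneg[OF M u])
  finally have "R * R \<le> R * Re (cinner u (M *\<^sub>v u))" by (simp add: power2_eq_square)
  then have "R \<le> Re (cinner u (M *\<^sub>v u))"
    using R0 positive_form_nonneg[OF M u] by (cases "R = 0") auto
  then show ?thesis unfolding R_def Re_cinner_self .
qed

lemma op_norm_le:
  assumes "\<And>v. v \<in> carrier_vec (dim_col A) \<Longrightarrow> vnorm v \<le> 1 \<Longrightarrow> vnorm (A *\<^sub>v v) \<le> r"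
  shows "op_norm A \<le> r"
  unfolding op_norm_def
proof (rule cSup_least)
  show "{vnorm (A *\<^sub>v v) |v. v \<in> carrier_vec (dim_col A) \<and> vnorm v \<le> 1} \<noteq> {}"
    by (auto intro!: exI[of _ "0\<^sub>v (dim_col A)"] simp: vnorm_def)
qed (use assms in blast)

lemma op_norm_le_sqrt:
  assumes M: "positive_form n M"
    and contraction: "\<And>x. x \<in> carrier_vec n \<Longrightarrow> Re (cinner x (M *\<^sub>v x)) \<le> Re (cinner x x)"
    and bound: "\<And>x. x \<in> carrier_vec n \<Longrightarrow> Re (cinner x (M *\<^sub>v x)) \<le> r * Re (cinner x x)"
    and r: "0 \<le> r"
  shows "op_norm M \<le> sqrt r"
proof (rule op_norm_le)
  fix v assume "v \<in> carrier_vec (dim_col M)" and v1: "vnorm v \<le> 1"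
  then have v: "v \<in> carrier_vec n" using positive_form_carrier[OF M] by simp
  have "0 \<le> vnorm v" unfolding vnorm_def by (simp add: sum_nonneg)
  with v1 have "(vnorm v)\<^sup>2 \<le> 1" by (simp add: power_le_one)
  have "(vnorm (M *\<^sub>v v))\<^sup>2 \<le> r * (vnorm v)\<^sup>2"
    using vnorm_mult_mat_vec_sq_le[OF M contraction v] bound[OF v] by (simp add: Re_cinner_self)
  also have "\<dots> \<le> r" using \<open>(vnorm v)\<^sup>2 \<le> 1\<close> r by (simp add: mult_left_le)
  finally show "vnorm (M *\<^sub>v v) \<le> sqrt r" by (simp add: real_le_rsqrt)
qed

lemma one_minus_mult_mat_vec:
  fixes M :: "'a :: comm_ring_1 mat"
  assumes "M \<in> carrier_mat n n" "v \<in> carrier_vec n"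
  shows "(1\<^sub>m n - M) *\<^sub>v v = v - M *\<^sub>v v"
  using assms by (simp add: minus_mult_distrib_mat_vec[OF one_carrier_mat assms])

lemma positive_form_one_minus:
  assumes M: "positive_form n M"
    and contraction: "\<And>x. x \<in> carrier_vec n \<Longrightarrow> Re (cinner x (M *\<^sub>v x)) \<le> Re (cinner x x)"
  shows "positive_form n (1\<^sub>m n - M)"
proof -
  note MC = positive_form_carrier[OF M]
  have cinner_B: "cinner x ((1\<^sub>m n - M) *\<^sub>v y) = cinner x y - cinner x (M *\<^sub>v y)"
    if "x \<in> carrier_vec n" "y \<in> carrier_vec n" for x y
    unfolding one_minus_mult_mat_vec[OF MC that(2)] using that MC by (intro cinner_minus_right) simp
  show ?thesis
  proof (rule positive_formI)
    fix x y :: "complex vec" assume x: "x \<in> carrier_vec n" and y: "y \<in> carrier_vec n"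
    show "cinner x ((1\<^sub>m n - M) *\<^sub>v y) = cnj (cinner y ((1\<^sub>m n - M) *\<^sub>v x))"
      unfolding cinner_B[OF x y] cinner_B[OF y x]
      using cinner_cnj[of x y] positive_form_hermitian[OF M x y] x y by simp
  qed (use MC cinner_B contraction in auto)
qed

text \<open>
  If \<open>1\<close> were not an eigenvalue, \<open>1 - M\<close> would be invertible and hence coercive, which pushes
  the operator norm of \<open>M\<close> strictly below \<open>1\<close>.
\<close>

lemma fixed_vector_of_op_norm_one:
  assumes M: "positive_form n M"
    and contraction: "\<And>x. x \<in> carrier_vec n \<Longrightarrow> Re (cinner x (M *\<^sub>v x)) \<le> Re (cinner x x)"
    and norm_one: "op_norm M = 1"
  shows "\<exists>u \<in> carrier_vec n. u \<noteq> 0\<^sub>v n \<and> M *\<^sub>v u = u"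
proof (rule ccontr)
  assume no_fixed: "\<not> ?thesis"
  note MC = positive_form_carrier[OF M]
  define B where "B = 1\<^sub>m n - M"
  have B: "positive_form n B" unfolding B_def by (rule positive_form_one_minus[OF M contraction])
  note BC = positive_form_carrier[OF B]
  have "det B \<noteq> 0"
  proof
    assume "det B = 0"
    then obtain v where v: "v \<in> carrier_vec n" "v \<noteq> 0\<^sub>v n" "v - M *\<^sub>v v = 0\<^sub>v n"
      using det_0_iff_vec_prod_zero[OF BC] one_minus_mult_mat_vec[OF MC] unfolding B_def by auto
    then have "M *\<^sub>v v = v" using diff_eq_zero_vec_iff[of v n "M *\<^sub>v v"] MC by auto
    with no_fixed v show False by auto
  qed
  from det_non_zero_imp_unit[OF BC this, unfolded Units_def ring_mat_def]
  obtain C where C: "C \<in> carrier_mat n n" and BC_one: "B * C = 1\<^sub>m n" by auto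
  define K where "K = (\<Sum>p<n. \<Sum>q<n. cmod (C $$ (p,q))) + 1"
  have K1: "1 \<le> K" unfolding K_def by (simp add: sum_nonneg)
  have "Re (cinner u (M *\<^sub>v u)) \<le> (1 - 1 / K) * Re (cinner u u)" if u: "u \<in> carrier_vec n" for u
  proof -
    have "Re (cinner u (B *\<^sub>v u)) = Re (cinner u u) - Re (cinner u (M *\<^sub>v u))"
      unfolding B_def one_minus_mult_mat_vec[OF MC u] using u MC by (simp add: cinner_minus_right)
    then have "Re (cinner u u) \<le> (K - 1) * (Re (cinner u u) - Re (cinner u (M *\<^sub>v u)))"
      using positive_form_coercive[OF B C BC_one u] unfolding K_def by simp
    also have "\<dots> \<le> K * (Re (cinner u u) - Re (cinner u (M *\<^sub>v u)))"
      using contraction[OF u] by (simp add: algebra_simps)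
    finally show ?thesis using K1 by (simp add: field_simps)
  qed
  then have "op_norm M \<le> sqrt (1 - 1 / K)"
    by (intro op_norm_le_sqrt[OF M contraction]) (use K1 in auto)
  also have "\<dots> < 1" using K1 by simp
  finally show False using norm_one by simp
qed

section \<open>Eigenspace and kernel dimensions\<close>

lemma smult_one_mult_mat_vec:
  assumes x: "x \<in> carrier_vec n"
  shows "(c \<cdot>\<^sub>m 1\<^sub>m n) *\<^sub>v x = (c :: 'a :: comm_ring_1) \<cdot>\<^sub>v x"
proof (rule eq_vecI)
  fix i assume "i < dim_vec (c \<cdot>\<^sub>v x)"
  then have i: "i < n" using x by simp
  have "((c \<cdot>\<^sub>m 1\<^sub>m n) *\<^sub>v x) $ i = (\<Sum>j<n. if i = j then c * x $ j else 0)"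
    unfolding mult_mat_vec_index[OF smult_carrier_mat[OF one_carrier_mat] x i]
    using i by (intro sum.cong refl) auto
  then show "((c \<cdot>\<^sub>m 1\<^sub>m n) *\<^sub>v x) $ i = (c \<cdot>\<^sub>v x) $ i" using i x by simp
qed (use x in simp)

lemma char_matrix_mult_mat_vec:
  assumes "X \<in> carrier_mat n n" "v \<in> carrier_vec n"
  shows "char_matrix X e *\<^sub>v v = X *\<^sub>v v - e \<cdot>\<^sub>v v"
  using assms unfolding char_matrix_def
  by (subst add_mult_distrib_mat_vec[of _ n n]) (auto simp: smult_one_mult_mat_vec intro!: eq_vecI)

lemma mat_kernel_char_matrix_iff:
  assumes X: "X \<in> carrier_mat n n"
  shows "v \<in> mat_kernel (char_matrix X e) \<longleftrightarrow> v \<in> carrier_vec n \<and> X *\<^sub>v v = e \<cdot>\<^sub>v v"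
  using X diff_eq_zero_vec_iff[of "X *\<^sub>v v" n "e \<cdot>\<^sub>v v"] carrier_matD[OF char_matrix_closed[OF X]]
  by (auto simp: mat_kernel_def char_matrix_mult_mat_vec)

lemma dim_gen_eigenspace_le_order:
  assumes A: "(A :: complex mat) \<in> carrier_mat n n"
  shows "dim_gen_eigenspace A ev 1 \<le> Polynomial.order ev (char_poly A)"
proof -
  obtain n_as where jnf: "jordan_nf A n_as"
    using jordan_nf_exists[OF A] char_poly_factorized[OF A] by blast
  have "(\<Sum>n \<leftarrow> map fst xs. min 1 n) \<le> sum_list (map fst xs)" for xs :: "(nat \<times> complex) list"
    by (induct xs) auto
  moreover have "[(n, e)\<leftarrow>n_as. e = ev] = filter (\<lambda>na. snd na = ev) n_as"
    by (intro filter_cong) auto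
  ultimately show ?thesis unfolding dim_gen_eigenspace[OF jnf] jordan_nf_order[OF jnf] by simp
qed

lemma dim_gen_eigenspace_pos:
  assumes A: "(A :: complex mat) \<in> carrier_mat n n" and ev: "eigenvalue A ev"
  shows "1 \<le> dim_gen_eigenspace A ev 1"
proof -
  obtain n_as where jnf: "jordan_nf A n_as"
    using jordan_nf_exists[OF A] char_poly_factorized[OF A] by blast
  let ?blocks = "filter (\<lambda>na. snd na = ev) n_as"
  have "poly (char_poly A) ev = 0" using eigenvalue_root_char_poly[OF A] ev by simp
  moreover have "char_poly A \<noteq> 0" using degree_monic_char_poly[OF A] by auto
  ultimately have "Polynomial.order ev (char_poly A) \<noteq> 0" using order_root by blast
  then have "?blocks \<noteq> []" unfolding jordan_nf_order[OF jnf] by (intro notI) simp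
  moreover have "0 \<notin> fst ` set ?blocks" using jnf unfolding jordan_nf_def by auto
  moreover have "[(n, e)\<leftarrow>n_as. e = ev] = ?blocks" by (intro filter_cong) auto
  moreover have "0 \<notin> fst ` set xs \<Longrightarrow> xs \<noteq> [] \<Longrightarrow> 1 \<le> (\<Sum>n \<leftarrow> map fst xs. min 1 n)"
    for xs :: "(nat \<times> complex) list"
    by (induct xs) auto
  ultimately show ?thesis unfolding dim_gen_eigenspace[OF jnf] by simp
qed

lemma mult_mat_vec_lincomb_index:
  fixes S :: "'a :: field mat"
  assumes S: "S \<in> carrier_mat n m" and Z: "Z \<subseteq> carrier_vec m" and i: "i < n"
  shows "(S *\<^sub>v module.lincomb (module_vec TYPE('a) m) a Z) $ i = (\<Sum>z\<in>Z. a z * (S *\<^sub>v z) $ i)"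
proof -
  interpret W: vec_space "TYPE('a)" m .
  have "(S *\<^sub>v W.lincomb a Z) $ i = (\<Sum>j<m. S $$ (i,j) * (\<Sum>z\<in>Z. a z * z $ j))"
    using mult_mat_vec_index[OF S _ i] W.lincomb_index[OF _ Z] W.lincomb_closed[OF Z] by simp
  also have "\<dots> = (\<Sum>j<m. \<Sum>z\<in>Z. a z * (S $$ (i,j) * z $ j))"
    by (simp add: sum_distrib_left ac_simps)
  also have "\<dots> = (\<Sum>z\<in>Z. a z * (\<Sum>j<m. S $$ (i,j) * z $ j))"
    by (subst sum.swap) (simp add: sum_distrib_left)
  also have "\<dots> = (\<Sum>z\<in>Z. a z * (S *\<^sub>v z) $ i)"
    using Z mult_mat_vec_index[OF S _ i] by (intro sum.cong) auto
  finally show ?thesis .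
qed

lemma lin_indpt_mult_mat_vec_image:
  fixes T S :: "'a :: field mat"
  assumes T: "T \<in> carrier_mat m n" and S: "S \<in> carrier_mat n m" and ST: "S * T = 1\<^sub>m n"
    and X: "X \<subseteq> carrier_vec n" and li: "\<not> module.lin_dep class_ring (module_vec TYPE('a) n) X"
  shows "\<not> module.lin_dep class_ring (module_vec TYPE('a) m) ((*\<^sub>v) T ` X)"
proof
  interpret V: vec_space "TYPE('a)" n .
  interpret W: vec_space "TYPE('a)" m .
  have STv: "S *\<^sub>v (T *\<^sub>v v) = v" if "v \<in> carrier_vec n" for v
    using that S T ST by (metis assoc_mult_mat_vec one_mult_mat_vec)
  assume "W.lin_dep ((*\<^sub>v) T ` X)"
  then obtain Z a z where Z: "finite Z" "Z \<subseteq> (*\<^sub>v) T ` X" and lc: "W.lincomb a Z = 0\<^sub>v m"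
    and z: "z \<in> Z" "a z \<noteq> 0"
    unfolding W.lin_dep_def by auto
  define Y where "Y = {x \<in> X. T *\<^sub>v x \<in> Z}"
  have YZ: "(*\<^sub>v) T ` Y = Z" unfolding Y_def using Z by auto
  have injY: "inj_on ((*\<^sub>v) T) Y"
    using STv X unfolding Y_def by (intro inj_onI) (metis mem_Collect_eq subsetD)
  have Y: "finite Y" "Y \<subseteq> carrier_vec n"
    using finite_imageD[of "(*\<^sub>v) T" Y] Z(1) YZ injY X unfolding Y_def by auto
  have ZC: "Z \<subseteq> carrier_vec m" using Z(2) X mult_mat_vec_carrier[OF T] by blast
  have "V.lincomb (a \<circ> (*\<^sub>v) T) Y = 0\<^sub>v n"
  proof (rule eq_vecI)
    fix i assume "i < dim_vec (0\<^sub>v n :: 'a vec)"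
    then have i: "i < n" by simp
    have "V.lincomb (a \<circ> (*\<^sub>v) T) Y $ i = (\<Sum>y\<in>Y. a (T *\<^sub>v y) * (S *\<^sub>v (T *\<^sub>v y)) $ i)"
      unfolding V.lincomb_index[OF i Y(2)] using Y(2) STv by (intro sum.cong) (auto simp: subset_iff)
    also have "\<dots> = (\<Sum>z\<in>Z. a z * (S *\<^sub>v z) $ i)"
      unfolding YZ[symmetric] by (simp add: sum.reindex[OF injY])
    also have "\<dots> = (S *\<^sub>v W.lincomb a Z) $ i"
      by (rule mult_mat_vec_lincomb_index[OF S ZC i, symmetric])
    finally show "V.lincomb (a \<circ> (*\<^sub>v) T) Y $ i = 0\<^sub>v n $ i" using i S unfolding lc by simp
  qed (use V.lincomb_dim Y in auto)
  moreover obtain y where "y \<in> Y" "T *\<^sub>v y = z" using z(1) YZ by auto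
  ultimately have "V.lin_dep X"
    unfolding V.lin_dep_def using Y z(2)
    by (intro exI[of _ Y] exI[of _ "a \<circ> (*\<^sub>v) T"] exI[of _ y]) (auto simp: Y_def)
  with li show False by simp
qed

lemma kernel_dim_le_of_left_inverse:
  fixes A B T S :: "'a :: field mat"
  assumes A: "A \<in> carrier_mat n n" and B: "B \<in> carrier_mat m m"
    and T: "T \<in> carrier_mat m n" and S: "S \<in> carrier_mat n m" and ST: "S * T = 1\<^sub>m n"
    and maps: "\<And>v. v \<in> mat_kernel A \<Longrightarrow> T *\<^sub>v v \<in> mat_kernel B"
  shows "kernel_dim A \<le> kernel_dim B"
proof -
  interpret KA: kernel n n A by unfold_locales (rule A)
  interpret KB: kernel m m B by unfold_locales (rule B)
  obtain bas where bas: "finite bas" "KA.basis bas" using kernel_basis_exists[OF A] by auto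
  then have basK: "bas \<subseteq> mat_kernel A" and li: "\<not> KA.lin_dep bas"
    unfolding KA.Ker.basis_def by auto
  have basC: "bas \<subseteq> carrier_vec n" using basK mat_kernel_carrier[OF A] by auto
  have imgK: "(*\<^sub>v) T ` bas \<subseteq> mat_kernel B" using basK maps by auto
  have "S *\<^sub>v (T *\<^sub>v v) = v" if "v \<in> carrier_vec n" for v
    using that S T ST by (metis assoc_mult_mat_vec one_mult_mat_vec)
  then have "inj_on ((*\<^sub>v) T) bas" using basC by (intro inj_onI) (metis subsetD)
  then have "card bas = card ((*\<^sub>v) T ` bas)" by (simp add: card_image)
  also have "\<dots> \<le> KB.dim"
  proof (rule KB.Ker.li_le_dim(2)[OF _ imgK])
    obtain basB where "finite basB" "KB.basis basB" using kernel_basis_exists[OF B] by auto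
    then show "KB.Ker.fin_dim" unfolding KB.Ker.fin_dim_def KB.Ker.basis_def by auto
    show "\<not> KB.lin_dep ((*\<^sub>v) T ` bas)"
      unfolding KB.lindep_same[OF imgK]
      by (rule lin_indpt_mult_mat_vec_image[OF T S ST basC li[unfolded KA.lindep_same[OF basK]]])
  qed
  finally show ?thesis using KA.Ker.dim_basis[OF bas] A B by simp
qed

section \<open>Kronecker products with the identity and partial traces\<close>

lemma sum_blocks: "(\<Sum>a<k * d. f a) = (\<Sum>i<k. \<Sum>r<d. f (i * d + r :: nat))"
proof -
  have block: "sum f {i * d..<i * d + d} = (\<Sum>r<d. f (i * d + r))" for i
    by (rule sum.reindex_bij_witness[of _ "\<lambda>r. i * d + r" "\<lambda>a. a - i * d"]) auto
  have "(\<Sum>a<k * d. f a) = (\<Sum>i<k. sum f {i * d..<i * d + d})" by (rule sum.nat_group[symmetric])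
  also have "\<dots> = (\<Sum>i<k. \<Sum>r<d. f (i * d + r))" by (simp only: block)
  finally show ?thesis .
qed

lemma block_index_less:
  assumes "(i::nat) < k" "r < d"
  shows "i * d + r < k * d"
proof -
  have "i * d + r < (i + 1) * d" using assms by simp
  also have "\<dots> \<le> k * d" using assms by (intro mult_right_mono) auto
  finally show ?thesis .
qed

lemma kron_dim [simp]:
  "dim_row (kron A B) = dim_row A * dim_row B" "dim_col (kron A B) = dim_col A * dim_col B"
  unfolding kron_def by simp_all

lemma kron_one_carrier: "A \<in> carrier_mat k k \<Longrightarrow> kron A (1\<^sub>m d) \<in> carrier_mat (k * d) (k * d)"
  unfolding carrier_mat_def by simp

lemma kron_one_index:
  assumes A: "A \<in> carrier_mat k k" and i: "i < k" and j: "j < k" and r: "r < d" and s: "s < d"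
  shows "kron A (1\<^sub>m d) $$ (i * d + r, j * d + s) = (if r = s then A $$ (i,j) else 0)"
proof -
  have "kron A (1\<^sub>m d) $$ (i * d + r, j * d + s)
      = A $$ ((i * d + r) div d, (j * d + s) div d) * 1\<^sub>m d $$ ((i * d + r) mod d, (j * d + s) mod d)"
    unfolding kron_def using A block_index_less[OF i r] block_index_less[OF j s] by simp
  also have "\<dots> = A $$ (i,j) * 1\<^sub>m d $$ (r, s)" using r s by simp
  finally show ?thesis using r s by simp
qed

lemma kron_one_mult_mat_vec_index:
  assumes A: "A \<in> carrier_mat k k" and q: "q \<in> carrier_vec (k * d)" and i: "i < k" and r: "r < d"
  shows "(kron A (1\<^sub>m d) *\<^sub>v q) $ (i * d + r) = (\<Sum>j<k. A $$ (i,j) * q $ (j * d + r))"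
proof -
  have "(kron A (1\<^sub>m d) *\<^sub>v q) $ (i * d + r)
      = (\<Sum>j<k. \<Sum>s<d. kron A (1\<^sub>m d) $$ (i * d + r, j * d + s) * q $ (j * d + s))"
    unfolding mult_mat_vec_index[OF kron_one_carrier[OF A] q block_index_less[OF i r]]
    by (rule sum_blocks)
  also have "\<dots> = (\<Sum>j<k. \<Sum>s<d. if r = s then A $$ (i,j) * q $ (j * d + s) else 0)"
    using A i r by (intro sum.cong refl) (simp add: kron_one_index)
  also have "\<dots> = (\<Sum>j<k. A $$ (i,j) * q $ (j * d + r))"
    using r by (intro sum.cong refl) (simp add: sum.delta)
  finally show ?thesis .
qed

lemma cinner_kron_one:
  assumes A: "A \<in> carrier_mat k k" and p: "p \<in> carrier_vec (k * d)" and q: "q \<in> carrier_vec (k * d)"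
  shows "cinner p (kron A (1\<^sub>m d) *\<^sub>v q)
    = (\<Sum>r<d. \<Sum>i<k. \<Sum>j<k. cnj (p $ (i * d + r)) * A $$ (i,j) * q $ (j * d + r))"
proof -
  have "dim_vec (kron A (1\<^sub>m d) *\<^sub>v q) = k * d" using A by simp
  then have "cinner p (kron A (1\<^sub>m d) *\<^sub>v q)
      = (\<Sum>i<k. \<Sum>r<d. cnj (p $ (i * d + r)) * (kron A (1\<^sub>m d) *\<^sub>v q) $ (i * d + r))"
    unfolding cinner_def by (simp only: sum_blocks)
  also have "\<dots> = (\<Sum>i<k. \<Sum>r<d. \<Sum>j<k. cnj (p $ (i * d + r)) * A $$ (i,j) * q $ (j * d + r))"
    using A q by (intro sum.cong refl)
      (simp del: index_mult_mat_vec add: kron_one_mult_mat_vec_index sum_distrib_left mult.assoc)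
  also have "\<dots> = (\<Sum>r<d. \<Sum>i<k. \<Sum>j<k. cnj (p $ (i * d + r)) * A $$ (i,j) * q $ (j * d + r))"
    by (rule sum.swap)
  finally show ?thesis .
qed

text \<open>\<open>A \<otimes> I\<close> acts on the slices \<open>(w (i d + r))\<^sub>i\<close> of a vector \<open>w\<close> as \<open>A\<close> does.\<close>

lemma kron_one_positive_form:
  assumes A: "psd k A"
  shows "positive_form (k * d) (kron A (1\<^sub>m d))"
proof -
  have AC: "A \<in> carrier_mat k k" and h: "mat_adjoint A = A" using A unfolding psd_def by auto
  define slice where "slice w r = vec k (\<lambda>i. w $ (i * d + r))" for w :: "complex vec" and r
  have slice_form: "(\<Sum>i<k. \<Sum>j<k. cnj (p $ (i * d + r)) * A $$ (i,j) * q $ (j * d + r))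
      = cinner (slice p r) (A *\<^sub>v slice q r)" for p q r
    unfolding cinner_def slice_def using AC
    by (simp del: index_mult_mat_vec add: mult_mat_vec_index sum_distrib_left mult.assoc)
  show ?thesis
  proof (rule positive_formI[OF kron_one_carrier[OF AC]])
    fix p q :: "complex vec" assume p: "p \<in> carrier_vec (k * d)" and q: "q \<in> carrier_vec (k * d)"
    have "cinner (slice p r) (A *\<^sub>v slice q r) = cnj (cinner (slice q r) (A *\<^sub>v slice p r))" for r
      by (rule self_adjoint_hermitian[OF AC h]) (simp_all add: slice_def)
    then show "cinner p (kron A (1\<^sub>m d) *\<^sub>v q) = cnj (cinner q (kron A (1\<^sub>m d) *\<^sub>v p))"
      unfolding cinner_kron_one[OF AC p q] cinner_kron_one[OF AC q p] slice_form
      by (simp add: cnj_sum)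
  next
    fix w :: "complex vec" assume w: "w \<in> carrier_vec (k * d)"
    show "0 \<le> Re (cinner w (kron A (1\<^sub>m d) *\<^sub>v w))"
      unfolding cinner_kron_one[OF AC w w] slice_form Re_sum
      by (intro sum_nonneg psd_cinner_nonneg[OF A]) (simp add: slice_def)
  qed
qed

definition ketbra :: "nat \<Rightarrow> complex vec \<Rightarrow> complex mat" where
  "ketbra n u = mat n n (\<lambda>(p,q). u $ p * cnj (u $ q))"

lemma ketbra_carrier [simp]: "ketbra n u \<in> carrier_mat n n"
  unfolding ketbra_def by simp

lemma mult_ketbra_mult_adjoint:
  assumes V: "V \<in> carrier_mat m n" and u: "u \<in> carrier_vec n"
  shows "V * ketbra n u * mat_adjoint V = ketbra m (V *\<^sub>v u)"
proof (rule eq_matI)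
  fix a b assume "a < dim_row (ketbra m (V *\<^sub>v u))" "b < dim_col (ketbra m (V *\<^sub>v u))"
  then have a: "a < m" and b: "b < m" by (simp_all add: ketbra_def)
  have Vu: "(V *\<^sub>v u) $ c = (\<Sum>p<n. V $$ (c,p) * u $ p)" if "c < m" for c
    using mult_mat_vec_index[OF V u that] .
  have VK: "(V * ketbra n u) $$ (a,q) = (V *\<^sub>v u) $ a * cnj (u $ q)" if "q < n" for q
    unfolding mult_mat_index[OF V ketbra_carrier a that] Vu[OF a] sum_distrib_right
    using that by (intro sum.cong refl) (simp add: ketbra_def mult.assoc)
  have "(V * ketbra n u * mat_adjoint V) $$ (a,b) = (\<Sum>q<n. (V *\<^sub>v u) $ a * cnj (V $$ (b,q) * u $ q))"
    using V a b
    by (subst mult_mat_index[of _ m n _ m]) (auto simp: VK ac_simps intro!: sum.cong)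
  also have "\<dots> = (V *\<^sub>v u) $ a * cnj ((V *\<^sub>v u) $ b)"
    unfolding Vu[OF b] by (simp add: sum_distrib_left cnj_sum)
  finally show "(V * ketbra n u * mat_adjoint V) $$ (a,b) = ketbra m (V *\<^sub>v u) $$ (a,b)"
    using a b by (simp add: ketbra_def)
qed (use V in \<open>simp_all add: ketbra_def\<close>)

lemma msum_carrier [simp]: "msum r c A I \<in> carrier_mat r c"
  unfolding msum_def by simp

lemma ptrace2_carrier [simp]: "ptrace2 k d X \<in> carrier_mat k k"
  unfolding ptrace2_def by simp

lemma mtrace_mult_index:
  assumes "A \<in> carrier_mat n n" "B \<in> carrier_mat n n"
  shows "mtrace (A * B) = (\<Sum>i<n. \<Sum>j<n. A $$ (i,j) * B $$ (j,i))"
proof -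
  have "(A * B) $$ (i,i) = (\<Sum>j<n. A $$ (i,j) * B $$ (j,i))" if "i < n" for i
    using mult_mat_index[OF assms that that] .
  moreover have "dim_row (A * B) = n" using assms by simp
  ultimately show ?thesis unfolding mtrace_def by (metis (no_types, lifting) lessThan_iff sum.cong)
qed

lemma mtrace_mult_ketbra:
  assumes M: "M \<in> carrier_mat n n" and u: "u \<in> carrier_vec n"
  shows "mtrace (M * ketbra n u) = cinner u (M *\<^sub>v u)"
  unfolding mtrace_mult_index[OF M ketbra_carrier] cinner_def using M u
  by (intro sum.cong) (auto simp del: index_mult_mat_vec
      simp: mult_mat_vec_index ketbra_def sum_distrib_left ac_simps)

lemma mtrace_mult_msum:
  assumes A: "A \<in> carrier_mat k k" and \<sigma>: "\<And>t. t \<in> I \<Longrightarrow> \<sigma> t \<in> carrier_mat k k"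
  shows "mtrace (A * msum k k (\<lambda>t. c t \<cdot>\<^sub>m \<sigma> t) I) = (\<Sum>t\<in>I. c t * mtrace (A * \<sigma> t))"
proof -
  have entry: "msum k k (\<lambda>t. c t \<cdot>\<^sub>m \<sigma> t) I $$ (j,i) = (\<Sum>t\<in>I. c t * \<sigma> t $$ (j,i))"
    if "i < k" "j < k" for i j
  proof -
    have "dim_row (\<sigma> t) = k" "dim_col (\<sigma> t) = k" if "t \<in> I" for t using \<sigma>[OF that] by auto
    then show ?thesis using that by (auto simp: msum_def intro!: sum.cong)
  qed
  have "mtrace (A * msum k k (\<lambda>t. c t \<cdot>\<^sub>m \<sigma> t) I)
      = (\<Sum>i<k. \<Sum>j<k. \<Sum>t\<in>I. c t * (A $$ (i,j) * \<sigma> t $$ (j,i)))"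
    unfolding mtrace_mult_index[OF A msum_carrier]
    by (intro sum.cong refl) (simp add: entry sum_distrib_left ac_simps)
  also have "\<dots> = (\<Sum>t\<in>I. c t * (\<Sum>i<k. \<Sum>j<k. A $$ (i,j) * \<sigma> t $$ (j,i)))"
    by (simp add: sum_distrib_left sum.swap[of _ I])
  finally show ?thesis using A \<sigma> by (simp add: mtrace_mult_index)
qed

lemma cinner_kron_one_ptrace2:
  assumes A: "A \<in> carrier_mat k k" and w: "w \<in> carrier_vec (k * d)"
  shows "cinner w (kron A (1\<^sub>m d) *\<^sub>v w) = mtrace (A * ptrace2 k d (ketbra (k * d) w))"
proof -
  have entry: "ptrace2 k d (ketbra (k * d) w) $$ (j,i) = (\<Sum>r<d. w $ (j * d + r) * cnj (w $ (i * d + r)))"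
    if "i < k" "j < k" for i j
    using that by (auto simp: ptrace2_def ketbra_def block_index_less intro!: sum.cong)
  have "mtrace (A * ptrace2 k d (ketbra (k * d) w))
      = (\<Sum>i<k. \<Sum>j<k. \<Sum>r<d. cnj (w $ (i * d + r)) * A $$ (i,j) * w $ (j * d + r))"
    unfolding mtrace_mult_index[OF A ptrace2_carrier]
    by (intro sum.cong refl) (simp only: lessThan_iff entry, simp add: sum_distrib_left ac_simps)
  also have "\<dots> = (\<Sum>r<d. \<Sum>i<k. \<Sum>j<k. cnj (w $ (i * d + r)) * A $$ (i,j) * w $ (j * d + r))"
    by (simp add: sum.swap[of _ "{..<d}"])
  finally show ?thesis unfolding cinner_kron_one[OF A w w] ..
qed

section \<open>Sorted eigenvalues and limits\<close>

lemma count_le_count_image_mset: "count A x \<le> count (image_mset f A) (f x)"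
  by (induct A) auto

lemma sorted_desc_nth_eq_bound:
  fixes xs :: "'a :: linorder list"
  assumes "sorted_wrt (\<ge>) xs" "\<forall>x \<in> set xs. x \<le> c" "m \<le> count (mset xs) c" "j < m"
  shows "xs ! j = c"
  using assms
proof (induct xs arbitrary: m j)
  case (Cons x xs)
  show ?case
  proof (cases "x = c")
    case True
    then show ?thesis using Cons by (cases j) (auto intro: Cons.hyps[of "m - 1"])
  next
    case False
    with Cons.prems(1,2) have "\<forall>y \<in> set (x # xs). y < c" by force
    then have "count (mset (x # xs)) c = 0" by (auto simp: count_eq_zero_iff)
    then show ?thesis using Cons.prems(3,4) by simp
  qed
qed simp

lemma eigs_desc_nth_eq_bound:
  assumes "\<And>x. x \<in># image_mset Re (proots (char_poly H)) \<Longrightarrow> x \<le> c"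
    and "m \<le> count (image_mset Re (proots (char_poly H))) c" and "j < m"
  shows "eigs_desc H ! j = c"
  unfolding eigs_desc_def
  by (rule sorted_desc_nth_eq_bound[of _ c m]) (use assms in \<open>auto simp: sorted_wrt_rev\<close>)

lemma eventually_le_of_le_Liminf_enat:
  assumes "enat m \<le> liminf (\<lambda>n. enat (f n))"
  shows "eventually (\<lambda>n. m \<le> f n) sequentially"
proof (cases "m = 0")
  case False
  then have "enat (m - 1) < enat m" by simp
  then have "eventually (\<lambda>n. enat (m - 1) < enat (f n)) sequentially"
    using assms unfolding le_Liminf_iff by blast
  then show ?thesis by (rule eventually_mono) (use False in auto)
qed simp

section \<open>Measure-and-prepare channels\<close>

lemma cinner_msum:
  assumes M: "\<And>t. t \<in> I \<Longrightarrow> M t \<in> carrier_mat n n" and u: "u \<in> carrier_vec n"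
  shows "cinner u (msum n n M I *\<^sub>v u) = (\<Sum>t\<in>I. cinner u (M t *\<^sub>v u))"
proof -
  have "(msum n n M I *\<^sub>v u) $ p = (\<Sum>t\<in>I. (M t *\<^sub>v u) $ p)" if p: "p < n" for p
  proof -
    have "(msum n n M I *\<^sub>v u) $ p = (\<Sum>q<n. \<Sum>t\<in>I. M t $$ (p,q) * u $ q)"
      unfolding mult_mat_vec_index[OF msum_carrier u p] using p
      by (simp add: msum_def sum_distrib_right)
    also have "\<dots> = (\<Sum>t\<in>I. (M t *\<^sub>v u) $ p)"
      by (subst sum.swap) (intro sum.cong refl, simp add: mult_mat_vec_index[OF M u p])
    finally show ?thesis .
  qed
  then have "cinner u (msum n n M I *\<^sub>v u) = (\<Sum>p<n. \<Sum>t\<in>I. cnj (u $ p) * (M t *\<^sub>v u) $ p)"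
    using msum_carrier[of n n M I, THEN carrier_matD(1)] unfolding cinner_def
    by (auto simp del: index_mult_mat_vec simp: sum_distrib_left intro!: sum.cong)
  also have "\<dots> = (\<Sum>t\<in>I. cinner u (M t *\<^sub>v u))"
    using M by (subst sum.swap) (auto simp: cinner_def intro!: sum.cong)
  finally show ?thesis .
qed

locale measure_prepare_channel =
  fixes k l N d :: nat and \<sigma> M :: "nat \<Rightarrow> complex mat"
    and \<Phi> :: "complex mat \<Rightarrow> complex mat" and V :: "complex mat"
  assumes states: "\<And>i. i < l \<Longrightarrow> \<sigma> i \<in> density k"
    and effects_psd: "\<And>i. i < l \<Longrightarrow> psd N (M i)"
    and effects_sum: "msum N N M {..<l} = 1\<^sub>m N"
    and effects_norm: "\<And>i. i < l \<Longrightarrow> op_norm (M i) = 1"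
    and channel: "\<And>\<rho>. \<Phi> \<rho> = msum k k (\<lambda>i. mtrace (M i * \<rho>) \<cdot>\<^sub>m \<sigma> i) {..<l}"
    and V_carrier: "V \<in> carrier_mat (k * d) N"
    and V_isometry: "mat_adjoint V * V = 1\<^sub>m N"
    and stinespring: "\<And>X. X \<in> carrier_mat N N \<Longrightarrow> \<Phi> X = ptrace2 k d (V * X * mat_adjoint V)"
begin

lemma effect_carrier: "t < l \<Longrightarrow> M t \<in> carrier_mat N N"
  using effects_psd unfolding psd_def by blast

lemma state_carrier: "t < l \<Longrightarrow> \<sigma> t \<in> carrier_mat k k"
  using states unfolding density_def psd_def by blast

lemma sum_cinner_effects: "u \<in> carrier_vec N \<Longrightarrow> (\<Sum>t<l. cinner u (M t *\<^sub>v u)) = cinner u u"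
  using cinner_msum[of "{..<l}" M N u] effect_carrier effects_sum by simp

lemma sum_Re_cinner_effects:
  "u \<in> carrier_vec N \<Longrightarrow> (\<Sum>t<l. Re (cinner u (M t *\<^sub>v u))) = Re (cinner u u)"
  by (metis Re_sum sum_cinner_effects)

lemma Re_cinner_effect_le:
  assumes i: "i < l" and u: "u \<in> carrier_vec N"
  shows "Re (cinner u (M i *\<^sub>v u)) \<le> Re (cinner u u)"
  unfolding sum_Re_cinner_effects[OF u, symmetric]
  using i psd_cinner_nonneg[OF effects_psd u] by (intro member_le_sum) auto

lemma cinner_effect_eq_zero_of_fixed:
  assumes i: "i < l" and u: "u \<in> carrier_vec N" and fixed: "M i *\<^sub>v u = u" and t: "t < l" "t \<noteq> i"
  shows "cinner u (M t *\<^sub>v u) = 0"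
proof -
  have "Re (cinner u (M i *\<^sub>v u)) + (\<Sum>s\<in>{..<l} - {i}. Re (cinner u (M s *\<^sub>v u)))
      = Re (cinner u (M i *\<^sub>v u))"
    using sum_Re_cinner_effects[OF u] i fixed by (simp add: sum.remove[of _ i])
  then have "(\<Sum>s\<in>{..<l} - {i}. Re (cinner u (M s *\<^sub>v u))) = 0" by simp
  then have "\<forall>s \<in> {..<l} - {i}. Re (cinner u (M s *\<^sub>v u)) = 0"
    using psd_cinner_nonneg[OF effects_psd u] by (subst (asm) sum_nonneg_eq_0_iff) auto
  then show ?thesis
    using t positive_form_real[OF psd_positive_form[OF effects_psd[OF t(1)]] u] by simp
qed

lemma effect_fixed_vector: "i < l \<Longrightarrow> \<exists>u \<in> carrier_vec N. u \<noteq> 0\<^sub>v N \<and> M i *\<^sub>v u = u"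
  by (rule fixed_vector_of_op_norm_one[OF psd_positive_form[OF effects_psd]
        Re_cinner_effect_le effects_norm])

lemma dim1_effect_pos:
  assumes i: "i < l"
  shows "1 \<le> dim1 (M i)"
proof -
  obtain u where u: "u \<in> carrier_vec N" "u \<noteq> 0\<^sub>v N" "M i *\<^sub>v u = u" using effect_fixed_vector[OF i] by blast
  then have "eigenvalue (M i) 1"
    using effect_carrier[OF i] unfolding eigenvalue_def eigenvector_def by (intro exI[of _ u]) auto
  then show ?thesis unfolding dim1_def by (rule dim_gen_eigenspace_pos[OF effect_carrier[OF i]])
qed

lemma V_mult_carrier: "u \<in> carrier_vec N \<Longrightarrow> V *\<^sub>v u \<in> carrier_vec (k * d)"
  using V_carrier by (rule mult_mat_vec_carrier)

lemma adjoint_V_mult_V: "u \<in> carrier_vec N \<Longrightarrow> mat_adjoint V *\<^sub>v (V *\<^sub>v u) = u"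
  using V_carrier V_isometry by (metis mat_adjoint_carrier assoc_mult_mat_vec one_mult_mat_vec)

definition dual :: "complex mat \<Rightarrow> complex mat" where
  "dual A = mat_adjoint V * kron A (1\<^sub>m d) * V"

lemma dual_carrier: "A \<in> carrier_mat k k \<Longrightarrow> dual A \<in> carrier_mat N N"
  unfolding dual_def using V_carrier kron_one_carrier by (meson mat_adjoint_carrier mult_carrier_mat)

lemma dual_mult_mat_vec:
  assumes A: "A \<in> carrier_mat k k" and u: "u \<in> carrier_vec N"
  shows "dual A *\<^sub>v u = mat_adjoint V *\<^sub>v (kron A (1\<^sub>m d) *\<^sub>v (V *\<^sub>v u))"
proof -
  have K: "kron A (1\<^sub>m d) \<in> carrier_mat (k * d) (k * d)" by (rule kron_one_carrier[OF A])
  have "dual A *\<^sub>v u = (mat_adjoint V * kron A (1\<^sub>m d)) *\<^sub>v (V *\<^sub>v u)"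
    unfolding dual_def using V_carrier K u
    by (intro assoc_mult_mat_vec[of _ N "k * d"] mult_carrier_mat[of _ N "k * d"]) auto
  also have "\<dots> = mat_adjoint V *\<^sub>v (kron A (1\<^sub>m d) *\<^sub>v (V *\<^sub>v u))"
    using V_carrier K V_mult_carrier[OF u] by (intro assoc_mult_mat_vec) auto
  finally show ?thesis .
qed

lemma cinner_dual:
  assumes A: "A \<in> carrier_mat k k" and x: "x \<in> carrier_vec N" and y: "y \<in> carrier_vec N"
  shows "cinner x (dual A *\<^sub>v y) = cinner (V *\<^sub>v x) (kron A (1\<^sub>m d) *\<^sub>v (V *\<^sub>v y))"
  unfolding dual_mult_mat_vec[OF A y]
  using V_carrier x kron_one_carrier[OF A, of d] V_mult_carrier[OF y]
  by (intro cinner_mat_adjoint_right) auto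

lemma cinner_dual_self:
  assumes A: "A \<in> carrier_mat k k" and u: "u \<in> carrier_vec N"
  shows "cinner u (dual A *\<^sub>v u) = (\<Sum>t<l. cinner u (M t *\<^sub>v u) * mtrace (A * \<sigma> t))"
proof -
  have "cinner u (dual A *\<^sub>v u) = mtrace (A * ptrace2 k d (ketbra (k * d) (V *\<^sub>v u)))"
    unfolding cinner_dual[OF A u u] by (rule cinner_kron_one_ptrace2[OF A V_mult_carrier[OF u]])
  also have "\<dots> = mtrace (A * \<Phi> (ketbra N u))"
    unfolding stinespring[OF ketbra_carrier] mult_ketbra_mult_adjoint[OF V_carrier u] ..
  also have "\<dots> = (\<Sum>t<l. mtrace (M t * ketbra N u) * mtrace (A * \<sigma> t))"
    unfolding channel by (rule mtrace_mult_msum[OF A state_carrier]) simp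
  also have "\<dots> = (\<Sum>t<l. cinner u (M t *\<^sub>v u) * mtrace (A * \<sigma> t))"
    using mtrace_mult_ketbra[OF effect_carrier u] by simp
  finally show ?thesis .
qed

lemma Re_cinner_dual_le:
  assumes A: "A \<in> carrier_mat k k" and c: "\<And>t. t < l \<Longrightarrow> Re (mtrace (A * \<sigma> t)) \<le> c"
    and u: "u \<in> carrier_vec N"
  shows "Re (cinner u (dual A *\<^sub>v u)) \<le> c * Re (cinner u u)"
proof -
  have real: "cinner u (M t *\<^sub>v u) = of_real (Re (cinner u (M t *\<^sub>v u)))" if "t < l" for t
    by (rule positive_form_real[OF psd_positive_form[OF effects_psd[OF that]] u])
  have "Re (cinner u (dual A *\<^sub>v u)) = (\<Sum>t<l. Re (cinner u (M t *\<^sub>v u)) * Re (mtrace (A * \<sigma> t)))"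
    unfolding cinner_dual_self[OF A u] Re_sum by (intro sum.cong refl) (subst real, auto)
  also have "\<dots> \<le> (\<Sum>t<l. Re (cinner u (M t *\<^sub>v u)) * c)"
    by (intro sum_mono mult_left_mono c psd_cinner_nonneg[OF effects_psd u]) auto
  also have "\<dots> = c * Re (cinner u u)"
    unfolding sum_distrib_right[symmetric] sum_Re_cinner_effects[OF u] by simp
  finally show ?thesis .
qed

lemma cinner_dual_fixed:
  assumes A: "A \<in> carrier_mat k k" and i: "i < l" and u: "u \<in> carrier_vec N"
    and fixed: "M i *\<^sub>v u = u"
  shows "cinner u (dual A *\<^sub>v u) = cinner u u * mtrace (A * \<sigma> i)"
  unfolding cinner_dual_self[OF A u]
  using i cinner_effect_eq_zero_of_fixed[OF i u fixed] fixed
  by (subst sum.remove[of _ i]) (auto intro: sum.neutral)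

lemma Re_mtrace_state_nonneg:
  assumes A: "psd k A" and i: "i < l"
  shows "0 \<le> Re (mtrace (A * \<sigma> i))"
proof -
  have AC: "A \<in> carrier_mat k k" using A unfolding psd_def by simp
  obtain u where u: "u \<in> carrier_vec N" "u \<noteq> 0\<^sub>v N" "M i *\<^sub>v u = u"
    using effect_fixed_vector[OF i] by blast
  have "0 \<le> Re (cinner u (dual A *\<^sub>v u))"
    unfolding cinner_dual[OF AC u(1) u(1)]
    by (rule positive_form_nonneg[OF kron_one_positive_form[OF A] V_mult_carrier[OF u(1)]])
  also have "\<dots> = Re (cinner u u) * Re (mtrace (A * \<sigma> i))"
    unfolding cinner_dual_fixed[OF AC i u(1) u(3)] by (subst cinner_self_real) simp
  finally show ?thesis using cinner_self_pos[OF u(1,2)] by (simp add: zero_le_mult_iff)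
qed

lemma cinner_bound_minus_dual:
  assumes A: "A \<in> carrier_mat k k" and x: "x \<in> carrier_vec N" and y: "y \<in> carrier_vec N"
  shows "cinner x ((of_real c \<cdot>\<^sub>m 1\<^sub>m N - dual A) *\<^sub>v y) = of_real c * cinner x y - cinner x (dual A *\<^sub>v y)"
  using dual_carrier[OF A] x y
  by (simp add: minus_mult_distrib_mat_vec[of _ N N] smult_one_mult_mat_vec
      cinner_minus_right cinner_smult_right)

lemma positive_form_bound_minus_dual:
  assumes A: "psd k A" and c: "\<And>t. t < l \<Longrightarrow> Re (mtrace (A * \<sigma> t)) \<le> c"
  shows "positive_form N (of_real c \<cdot>\<^sub>m 1\<^sub>m N - dual A)"
proof -
  have AC: "A \<in> carrier_mat k k" using A unfolding psd_def by simp
  show ?thesis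
  proof (rule positive_formI)
    fix x y :: "complex vec" assume x: "x \<in> carrier_vec N" and y: "y \<in> carrier_vec N"
    show "cinner x ((of_real c \<cdot>\<^sub>m 1\<^sub>m N - dual A) *\<^sub>v y)
        = cnj (cinner y ((of_real c \<cdot>\<^sub>m 1\<^sub>m N - dual A) *\<^sub>v x))"
      unfolding cinner_bound_minus_dual[OF AC x y] cinner_bound_minus_dual[OF AC y x]
        cinner_dual[OF AC x y] cinner_dual[OF AC y x]
      using cinner_cnj[of x y] x y
        positive_form_hermitian[OF kron_one_positive_form[OF A] V_mult_carrier[OF x] V_mult_carrier[OF y]]
      by simp
  qed (use dual_carrier[OF AC] cinner_bound_minus_dual[OF AC] Re_cinner_dual_le[OF AC c] in auto)
qed

text \<open>
  A fixed vector of an effect \<open>M\<^sub>i\<close> whose state maximises \<open>Re Tr (A \<sigma>\<^sub>t)\<close> attains the maximum \<open>c\<close>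
  of the form \<open>\<Phi>\<^sup>\<dagger>(A) \<le> c\<close>, so it lies in the kernel of the positive form \<open>c - \<Phi>\<^sup>\<dagger>(A)\<close>.
\<close>

lemma dual_eigenvector:
  assumes A: "psd k A" and c: "\<And>t. t < l \<Longrightarrow> Re (mtrace (A * \<sigma> t)) \<le> c"
    and i: "i < l" and ci: "Re (mtrace (A * \<sigma> i)) = c"
    and w: "w \<in> carrier_vec N" and fixed: "M i *\<^sub>v w = w"
  shows "dual A *\<^sub>v w = of_real c \<cdot>\<^sub>v w"
proof -
  have AC: "A \<in> carrier_mat k k" using A unfolding psd_def by simp
  note G = dual_carrier[OF AC]
  have "Re (cinner w ((of_real c \<cdot>\<^sub>m 1\<^sub>m N - dual A) *\<^sub>v w))
      = c * Re (cinner w w) - Re (cinner w w * mtrace (A * \<sigma> i))"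
    unfolding cinner_bound_minus_dual[OF AC w w] cinner_dual_fixed[OF AC i w fixed] by simp
  also have "\<dots> = 0" using ci by (subst cinner_self_real) simp
  finally have "(of_real c \<cdot>\<^sub>m 1\<^sub>m N - dual A) *\<^sub>v w = 0\<^sub>v N"
    using positive_form_kernel[OF positive_form_bound_minus_dual[OF A c] w] by simp
  then have "of_real c \<cdot>\<^sub>v w - dual A *\<^sub>v w = 0\<^sub>v N"
    using G w by (simp add: minus_mult_distrib_mat_vec[of _ N N] smult_one_mult_mat_vec)
  then show ?thesis using diff_eq_zero_vec_iff[of "of_real c \<cdot>\<^sub>v w" N "dual A *\<^sub>v w"] G w by auto
qed

definition compress :: "complex mat \<Rightarrow> complex mat" where
  "compress A = V * mat_adjoint V * kron A (1\<^sub>m d) * (V * mat_adjoint V)"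

lemma compress_eq_dual:
  assumes A: "A \<in> carrier_mat k k"
  shows "compress A = V * dual A * mat_adjoint V"
proof -
  note K = kron_one_carrier[OF A, of d] and VA = mat_adjoint_carrier[OF V_carrier]
  have VAK: "mat_adjoint V * kron A (1\<^sub>m d) \<in> carrier_mat N (k * d)" by (rule mult_carrier_mat[OF VA K])
  have "compress A = V * (mat_adjoint V * kron A (1\<^sub>m d)) * (V * mat_adjoint V)"
    unfolding compress_def by (simp only: assoc_mult_mat[OF V_carrier VA K])
  also have "\<dots> = V * (mat_adjoint V * kron A (1\<^sub>m d)) * V * mat_adjoint V"
    by (rule assoc_mult_mat[OF mult_carrier_mat[OF V_carrier VAK] V_carrier VA, symmetric])
  also have "\<dots> = V * dual A * mat_adjoint V"
    unfolding dual_def by (simp only: assoc_mult_mat[OF V_carrier VAK V_carrier])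
  finally show ?thesis .
qed

lemma compress_carrier: "A \<in> carrier_mat k k \<Longrightarrow> compress A \<in> carrier_mat (k * d) (k * d)"
  unfolding compress_eq_dual using V_carrier dual_carrier
  by (meson mat_adjoint_carrier mult_carrier_mat)

lemma compress_mult_mat_vec:
  assumes A: "A \<in> carrier_mat k k" and v: "v \<in> carrier_vec (k * d)"
  shows "compress A *\<^sub>v v = V *\<^sub>v (dual A *\<^sub>v (mat_adjoint V *\<^sub>v v))"
  unfolding compress_eq_dual[OF A]
  using V_carrier dual_carrier[OF A] v mult_mat_vec_carrier[OF mat_adjoint_carrier[OF V_carrier] v]
  by (subst assoc_mult_mat_vec[of _ "k * d" N]) (auto intro!: assoc_mult_mat_vec)

lemma compress_eigenvalue_le:
  assumes A: "psd k A" and c0: "0 \<le> c" and c: "\<And>t. t < l \<Longrightarrow> Re (mtrace (A * \<sigma> t)) \<le> c"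
    and x: "x \<in># proots (char_poly (compress A))"
  shows "Re x \<le> c"
proof (cases "x = 0")
  case False
  have AC: "A \<in> carrier_mat k k" using A unfolding psd_def by simp
  note H = compress_carrier[OF AC]
  have "char_poly (compress A) \<noteq> 0" using degree_monic_char_poly[OF H] by auto
  then have "poly (char_poly (compress A)) x = 0" using x by simp
  then have "eigenvalue (compress A) x" using eigenvalue_root_char_poly[OF H] by simp
  then obtain v where v: "v \<in> carrier_vec (k * d)" "v \<noteq> 0\<^sub>v (k * d)" "compress A *\<^sub>v v = x \<cdot>\<^sub>v v"
    unfolding eigenvalue_def eigenvector_def using H by auto
  \<comment> \<open>an eigenvector for a nonzero eigenvalue lies in the range of \<open>V\<close>\<close>
  define u where "u = mat_adjoint V *\<^sub>v v"
  have u: "u \<in> carrier_vec N"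
    unfolding u_def using mult_mat_vec_carrier[OF mat_adjoint_carrier[OF V_carrier] v(1)] .
  define g where "g = dual A *\<^sub>v u"
  have g: "g \<in> carrier_vec N" unfolding g_def using dual_carrier[OF AC] u by simp
  have v_eq: "v = V *\<^sub>v ((1 / x) \<cdot>\<^sub>v g)"
  proof -
    have "v = (1 / x) \<cdot>\<^sub>v (x \<cdot>\<^sub>v v)" using False by (simp add: smult_smult_assoc)
    also have "\<dots> = V *\<^sub>v ((1 / x) \<cdot>\<^sub>v g)"
      using v(3) V_carrier g unfolding compress_mult_mat_vec[OF AC v(1)] g_def u_def
      by (simp add: mult_mat_vec)
    finally show ?thesis .
  qed
  then have u_eq: "u = (1 / x) \<cdot>\<^sub>v g" unfolding u_def using g by (simp add: adjoint_V_mult_V)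
  then have g_eq: "g = x \<cdot>\<^sub>v u" using False by (simp add: smult_smult_assoc)
  have "u \<noteq> 0\<^sub>v N" using v(2) v_eq u_eq V_carrier by auto
  have "x * cinner u u = cinner u (dual A *\<^sub>v u)"
    unfolding g_def[symmetric] g_eq by (simp add: cinner_smult_right)
  moreover have "Re (x * cinner u u) = Re x * Re (cinner u u)" by (subst cinner_self_real) simp
  ultimately have "Re x * Re (cinner u u) \<le> c * Re (cinner u u)"
    using Re_cinner_dual_le[OF AC c u] by simp
  then show ?thesis using cinner_self_pos[OF u \<open>u \<noteq> 0\<^sub>v N\<close>] by simp
qed (use c0 in simp)

lemma count_eigenvalue_compress_ge:
  assumes A: "psd k A" and c: "\<And>t. t < l \<Longrightarrow> Re (mtrace (A * \<sigma> t)) \<le> c"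
    and i: "i < l" and ci: "Re (mtrace (A * \<sigma> i)) = c"
  shows "dim1 (M i) \<le> count (image_mset Re (proots (char_poly (compress A)))) c"
proof -
  have AC: "A \<in> carrier_mat k k" using A unfolding psd_def by simp
  note H = compress_carrier[OF AC]
  have maps: "V *\<^sub>v w \<in> mat_kernel (char_matrix (compress A) (of_real c))"
    if "w \<in> mat_kernel (char_matrix (M i) 1)" for w
  proof -
    have w: "w \<in> carrier_vec N" "M i *\<^sub>v w = w"
      using that mat_kernel_char_matrix_iff[OF effect_carrier[OF i]] by auto
    have "compress A *\<^sub>v (V *\<^sub>v w) = V *\<^sub>v (dual A *\<^sub>v w)"
      unfolding compress_mult_mat_vec[OF AC V_mult_carrier[OF w(1)]] adjoint_V_mult_V[OF w(1)] ..
    also have "\<dots> = of_real c \<cdot>\<^sub>v (V *\<^sub>v w)"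
      using dual_eigenvector[OF A c i ci w] V_carrier w by (simp add: mult_mat_vec)
    finally have "compress A *\<^sub>v (V *\<^sub>v w) = of_real c \<cdot>\<^sub>v (V *\<^sub>v w)" .
    then show ?thesis using mat_kernel_char_matrix_iff[OF H] V_mult_carrier[OF w(1)] by simp
  qed
  have "kernel_dim (char_matrix (M i) 1) \<le> kernel_dim (char_matrix (compress A) (of_real c))"
    by (rule kernel_dim_le_of_left_inverse[OF _ _ V_carrier _ V_isometry])
      (use effect_carrier[OF i] H maps mat_adjoint_carrier[OF V_carrier] in auto)
  then have "dim1 (M i) \<le> kernel_dim (char_matrix (compress A) (of_real c))"
    unfolding dim1_def dim_gen_eigenspace_def using effect_carrier[OF i] by (simp add: One_nat_def)
  also have "\<dots> \<le> Polynomial.order (of_real c) (char_poly (compress A))"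
    using dim_gen_eigenspace_le_order[OF H] by (simp add: dim_gen_eigenspace_def One_nat_def)
  also have "\<dots> = count (proots (char_poly (compress A))) (of_real c)"
    using degree_monic_char_poly[OF H] by (subst count_proots) auto
  also have "\<dots> \<le> count (image_mset Re (proots (char_poly (compress A)))) c"
    using count_le_count_image_mset[of _ "of_real c" Re] by simp
  finally show ?thesis .
qed

lemma eigs_desc_compress:
  assumes l: "0 < l" and A: "psd k A"
    and m: "m \<le> Min ((\<lambda>i. dim1 (M i)) ` {..<l})" and j: "j < m"
  shows "eigs_desc (compress A) ! j = Max ((\<lambda>t. Re (mtrace (A * \<sigma> t))) ` {..<l})"
proof -
  define c where "c = Max ((\<lambda>t. Re (mtrace (A * \<sigma> t))) ` {..<l})"
  have c: "Re (mtrace (A * \<sigma> t)) \<le> c" if "t < l" for t unfolding c_def using that by simp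
  obtain i where i: "i < l" and ci: "Re (mtrace (A * \<sigma> i)) = c"
    using Max_in[of "(\<lambda>t. Re (mtrace (A * \<sigma> t))) ` {..<l}"] l unfolding c_def by fastforce
  have "m \<le> dim1 (M i)" using m i by (meson Min_le finite_imageI finite_lessThan image_eqI
        le_trans lessThan_iff)
  also have "\<dots> \<le> count (image_mset Re (proots (char_poly (compress A)))) c"
    by (rule count_eigenvalue_compress_ge[OF A c i ci])
  finally show ?thesis unfolding c_def[symmetric]
    using compress_eigenvalue_le[OF A _ c] Re_mtrace_state_nonneg[OF A i] ci j
    by (intro eigs_desc_nth_eq_bound) auto
qed

end

theorem proposition6p2:
  fixes k l :: nat
    and \<sigma> :: "nat \<Rightarrow> complex mat"
    and N :: "nat \<Rightarrow> nat"
    and M :: "nat \<Rightarrow> nat \<Rightarrow> complex mat"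
    and \<Phi> :: "nat \<Rightarrow> complex mat \<Rightarrow> complex mat"
    and d :: "nat \<Rightarrow> nat"
    and V :: "nat \<Rightarrow> complex mat"
  assumes l_pos: "l \<ge> 1"
    and states: "\<And>i. i < l \<Longrightarrow> \<sigma> i \<in> density k"
    and povm_psd: "\<And>n i. i < l \<Longrightarrow> psd (N n) (M n i)"
    and povm_sum: "\<And>n. msum (N n) (N n) (M n) {..<l} = 1\<^sub>m (N n)"
    and norm_one: "\<And>n i. i < l \<Longrightarrow> op_norm (M n i) = 1"
    and Phi_def: "\<And>n \<rho>. \<Phi> n \<rho> = msum k k (\<lambda>i. mtrace (M n i * \<rho>) \<cdot>\<^sub>m \<sigma> i) {..<l}"
    and V_carrier: "\<And>n. V n \<in> carrier_mat (k * d n) (N n)"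
    and V_isometry: "\<And>n. mat_adjoint (V n) * V n = 1\<^sub>m (N n)"
    and stinespring: "\<And>n X. X \<in> carrier_mat (N n) (N n) \<Longrightarrow>
                         \<Phi> n X = ptrace2 k (d n) (V n * X * mat_adjoint (V n))"
  shows "1 \<le> liminf (\<lambda>n. enat (Min ((\<lambda>i. dim1 (M n i)) ` {..<l}))) \<and>
         (\<forall>m::nat. enat m \<le> liminf (\<lambda>n. enat (Min ((\<lambda>i. dim1 (M n i)) ` {..<l})))
             \<longrightarrow> cond_C m k d (\<lambda>n. V n * mat_adjoint (V n)))"
proof -
  have channel: "measure_prepare_channel k l (N n) (d n) \<sigma> (M n) (\<Phi> n) (V n)" for n
    by unfold_locales (use states povm_psd povm_sum norm_one Phi_def V_carrier V_isometry stinespring in auto)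
  have "1 \<le> Min ((\<lambda>i. dim1 (M n i)) ` {..<l})" for n
    using measure_prepare_channel.dim1_effect_pos[OF channel] l_pos
    by (subst Min_ge_iff) (auto simp: lessThan_empty_iff)
  then have "1 \<le> liminf (\<lambda>n. enat (Min ((\<lambda>i. dim1 (M n i)) ` {..<l})))"
    by (intro Liminf_bounded always_eventually allI) (simp add: one_enat_def)
  moreover have "cond_C m k d (\<lambda>n. V n * mat_adjoint (V n))"
    if "enat m \<le> liminf (\<lambda>n. enat (Min ((\<lambda>i. dim1 (M n i)) ` {..<l})))" for m
    unfolding cond_C_def
  proof (intro ballI exI allI impI)
    fix A j assume A: "A \<in> density k" and j: "j < m"
    show "(\<lambda>n. eigs_desc (V n * mat_adjoint (V n) * kron A (1\<^sub>m (d n)) * (V n * mat_adjoint (V n))) ! j)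
        \<longlonglongrightarrow> Max ((\<lambda>t. Re (mtrace (A * \<sigma> t))) ` {..<l})"
      using eventually_le_of_le_Liminf_enat[OF that]
        measure_prepare_channel.eigs_desc_compress[OF channel _ _ _ j] l_pos A
      by (intro tendsto_eventually) (auto elim!: eventually_mono
          simp: density_def measure_prepare_channel.compress_def[OF channel])
  qed
  ultimately show ?thesis by blast
qed

end
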